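(* The following three assignment rules are majoritarian: (1) the rule $\mathit{PO}$ returning all Pareto-optimal assignments; (2) least unpopularity, returning all assignments minimizing the unpopularity margin; (3) mixed popularity, returning all assignments that lie in the support of some mixed popular distribution.
   Context: Let $N=\{1,\dots,n\}$ be agents and $H$ a set of $n$ houses. A profile $P=(\succ_1,\dots,\succ_n)$ gives each agent a strict linear order on $H$. An assignment is a bijection $\mu:N\to H$; $M$ is the set of all assignments. Agent $x$ weakly prefers $\mu$ to $\lambda$ if $\mu(x)\succ_x\lambda(x)$ or $\mu(x)=\lambda(x)$, and strictly prefers it if $\mu(x)\succ_x\lambda(x)$. Let $N_{\mu,\lambda}$ be the set of agents weakly preferring $\mu$ to $\lambda$; $\mu\succsim\lambda$ if $|N_{\mu,\lambda}|\ge|N_{\lambda,\mu}|$. The majority graph of $P$ is $G_P=(M,\{(\mu,\lambda):\mu\succsim\lambda\})$. An assignment rule $F$ maps every profile $P$ to a nonempty set $F(P)\subseteq M$; it is majoritarian if $F(P)=F(P')$ for all profiles $P,P'$ with $G_P=G_{P'}$. $\mu$ Pareto-dominates $\lambda$ if every agent weakly prefers $\mu$ to $\lambda$ and some agent strictly prefers $\mu$ to $\lambda$; $\mu$ is Pareto-optimal if no assignment Pareto-dominates it. The unpopularity margin of $\mu$ is $\max_{\lambda\in M}(|N_{\lambda,\mu}|-|N_{\mu,\lambda}|)$; least unpopularity returns all assignments minimizing it. A probability distribution $\pi$ on $M$ is mixed popular if for every $\lambda\in M$, $\sum_{\mu\in M}\pi(\mu)\,(|N_{\mu,\lambda}|-|N_{\lambda,\mu}|)\ge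 0$; mixed popularity returns all assignments $\mu$ with $\pi(\mu)>0$ for some mixed popular $\pi$. *)

theory Defs
  imports "HOL-Analysis.Analysis"
begin

(* Agents are {1..n}; houses form a finite set H of type 'h with card H = n.
   A preference of an agent is a relation R :: ('h * 'h) set, (a,b) \<in> R meaning a \<succ> b. *)

definition agents :: "nat \<Rightarrow> nat set" where
  "agents n = {1..n}"

definition is_profile :: "nat \<Rightarrow> 'h set \<Rightarrow> (nat \<Rightarrow> ('h \<times> 'h) set) \<Rightarrow> bool" where
  "is_profile n H P \<longleftrightarrow>
     (\<forall>i\<in>agents n. strict_linear_order_on H (P i) \<and> P i \<subseteq> H \<times> H)"

definition assignments :: "nat \<Rightarrow> 'h set \<Rightarrow> (nat \<Rightarrow> 'h) set" where
  "assignments n H = {\<mu>. bij_betw \<mu> (agents n) H \<and> \<mu> \<in> extensional (agents n)}"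

definition weak_pref :: "(nat \<Rightarrow> ('h \<times> 'h) set) \<Rightarrow> nat \<Rightarrow> (nat \<Rightarrow> 'h) \<Rightarrow> (nat \<Rightarrow> 'h) \<Rightarrow> bool" where
  "weak_pref P x \<mu> l \<longleftrightarrow> (\<mu> x, l x) \<in> P x \<or> \<mu> x = l x"

definition strict_pref :: "(nat \<Rightarrow> ('h \<times> 'h) set) \<Rightarrow> nat \<Rightarrow> (nat \<Rightarrow> 'h) \<Rightarrow> (nat \<Rightarrow> 'h) \<Rightarrow> bool" where
  "strict_pref P x \<mu> l \<longleftrightarrow> (\<mu> x, l x) \<in> P x"

definition N_weak :: "nat \<Rightarrow> (nat \<Rightarrow> ('h \<times> 'h) set) \<Rightarrow> (nat \<Rightarrow> 'h) \<Rightarrow> (nat \<Rightarrow> 'h) \<Rightarrow> nat set" where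
  "N_weak n P \<mu> l = {x \<in> agents n. weak_pref P x \<mu> l}"

definition margin :: "nat \<Rightarrow> (nat \<Rightarrow> ('h \<times> 'h) set) \<Rightarrow> (nat \<Rightarrow> 'h) \<Rightarrow> (nat \<Rightarrow> 'h) \<Rightarrow> int" where
  "margin n P \<mu> l = int (card (N_weak n P \<mu> l)) - int (card (N_weak n P l \<mu>))"

definition maj_graph :: "nat \<Rightarrow> 'h set \<Rightarrow> (nat \<Rightarrow> ('h \<times> 'h) set) \<Rightarrow> ((nat \<Rightarrow> 'h) \<times> (nat \<Rightarrow> 'h)) set" where
  "maj_graph n H P = {(\<mu>, l). \<mu> \<in> assignments n H \<and> l \<in> assignments n H \<and>
       card (N_weak n P \<mu> l) \<ge> card (N_weak n P l \<mu>)}"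

definition majoritarian :: "nat \<Rightarrow> 'h set \<Rightarrow> ((nat \<Rightarrow> ('h \<times> 'h) set) \<Rightarrow> (nat \<Rightarrow> 'h) set) \<Rightarrow> bool" where
  "majoritarian n H F \<longleftrightarrow>
     (\<forall>P P'. is_profile n H P \<longrightarrow> is_profile n H P' \<longrightarrow>
        maj_graph n H P = maj_graph n H P' \<longrightarrow> F P = F P')"

definition pareto_dominates :: "nat \<Rightarrow> (nat \<Rightarrow> ('h \<times> 'h) set) \<Rightarrow> (nat \<Rightarrow> 'h) \<Rightarrow> (nat \<Rightarrow> 'h) \<Rightarrow> bool" where
  "pareto_dominates n P \<mu> l \<longleftrightarrow>
     (\<forall>x\<in>agents n. weak_pref P x \<mu> l) \<and> (\<exists>x\<in>agents n. strict_pref P x \<mu> l)"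

definition PO :: "nat \<Rightarrow> 'h set \<Rightarrow> (nat \<Rightarrow> ('h \<times> 'h) set) \<Rightarrow> (nat \<Rightarrow> 'h) set" where
  "PO n H P = {\<mu> \<in> assignments n H. \<not> (\<exists>l\<in>assignments n H. pareto_dominates n P l \<mu>)}"

definition unpopularity_margin :: "nat \<Rightarrow> 'h set \<Rightarrow> (nat \<Rightarrow> ('h \<times> 'h) set) \<Rightarrow> (nat \<Rightarrow> 'h) \<Rightarrow> int" where
  "unpopularity_margin n H P \<mu> = Max ((\<lambda>l. margin n P l \<mu>) ` assignments n H)"

definition least_unpopularity :: "nat \<Rightarrow> 'h set \<Rightarrow> (nat \<Rightarrow> ('h \<times> 'h) set) \<Rightarrow> (nat \<Rightarrow> 'h) set" where
  "least_unpopularity n H P = {\<mu> \<in> assignments n H.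
     \<forall>\<nu>\<in>assignments n H. unpopularity_margin n H P \<mu> \<le> unpopularity_margin n H P \<nu>}"

definition is_distribution :: "nat \<Rightarrow> 'h set \<Rightarrow> ((nat \<Rightarrow> 'h) \<Rightarrow> real) \<Rightarrow> bool" where
  "is_distribution n H \<pi> \<longleftrightarrow>
     (\<forall>\<mu>\<in>assignments n H. \<pi> \<mu> \<ge> 0) \<and> (\<Sum>\<mu>\<in>assignments n H. \<pi> \<mu>) = 1"

definition mixed_popular :: "nat \<Rightarrow> 'h set \<Rightarrow> (nat \<Rightarrow> ('h \<times> 'h) set) \<Rightarrow> ((nat \<Rightarrow> 'h) \<Rightarrow> real) \<Rightarrow> bool" where
  "mixed_popular n H P \<pi> \<longleftrightarrow> is_distribution n H \<pi> \<and>
     (\<forall>l\<in>assignments n H. (\<Sum>\<mu>\<in>assignments n H. \<pi> \<mu> * of_int (margin n P \<mu> l)) \<ge> 0)"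

definition mixed_popularity :: "nat \<Rightarrow> 'h set \<Rightarrow> (nat \<Rightarrow> ('h \<times> 'h) set) \<Rightarrow> (nat \<Rightarrow> 'h) set" where
  "mixed_popularity n H P = {\<mu> \<in> assignments n H. \<exists>\<pi>. mixed_popular n H P \<pi> \<and> \<pi> \<mu> > 0}"

end

theory Submission
  imports Defs
begin

(* All three rules see the profile only through the margins: l Pareto-dominates m iff l \<noteq> m
   and the margin of l over m equals the number of agents whose house changes. So it suffices
   that the signs of all margins determine the margins. The margin is a sum over agents of
   pref_sign P x (l x) (m x) \<in> {-1, 0, 1}; for profiles P, P' with the same majority graph let
   d x u v be the difference of these signs under P and P'.
   Exchanging the houses of two agents gives margins in {-2, 0, 2} with equal signs under P and
   P', which forces d x u v to be independent of the agent x. Rotating three houses among three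
   agents gives odd margins; a suitable choice of the agents' roles shows that
   d a b + d b c + d c a = 0. Hence d u v = \<phi> u - \<phi> v for a potential \<phi>, and the difference
   of the margins, \<Sum>x. \<phi> (l x) - \<phi> (m x), vanishes because l and m are both bijections onto H. *)

lemma finite_agents [simp]: "finite (agents n)"
  by (simp add: agents_def)

definition pref_sign :: "(nat \<Rightarrow> ('h \<times> 'h) set) \<Rightarrow> nat \<Rightarrow> 'h \<Rightarrow> 'h \<Rightarrow> int" where
  "pref_sign P x u v = of_bool ((u, v) \<in> P x \<or> u = v) - of_bool ((v, u) \<in> P x \<or> v = u)"

lemma pref_sign_refl [simp]: "pref_sign P x u u = 0"
  by (simp add: pref_sign_def)

lemma pref_sign_swap: "pref_sign P x v u = - pref_sign P x u v"
  by (simp add: pref_sign_def)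

lemma margin_eq_sum_pref_sign: "margin n P l m = (\<Sum>x\<in>agents n. pref_sign P x (l x) (m x))"
  by (simp add: margin_def N_weak_def weak_pref_def pref_sign_def sum_subtractf
      of_bool_def sum.If_cases Int_def conj_commute eq_commute)

lemma pref_sign_distinct:
  assumes "is_profile n H P" "x \<in> agents n" "u \<in> H" "v \<in> H" "u \<noteq> v"
  shows "pref_sign P x u v = (if (u, v) \<in> P x then 1 else -1)"
proof -
  have "strict_linear_order_on H (P x)" using assms(1,2) by (simp add: is_profile_def)
  then have "(u, v) \<in> P x \<or> (v, u) \<in> P x" "\<not> ((u, v) \<in> P x \<and> (v, u) \<in> P x)"
    using assms(3-5) unfolding strict_linear_order_on_def total_on_def trans_def irrefl_def
    by blast+
  then show ?thesis using assms(5) by (auto simp: pref_sign_def)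
qed

lemma pref_sign_distinct_range:
  assumes "is_profile n H P" "x \<in> agents n" "u \<in> H" "v \<in> H" "u \<noteq> v"
  shows "pref_sign P x u v \<in> {-1, 1}"
  using pref_sign_distinct[OF assms] by simp

lemma pref_sign_cycle:
  assumes "is_profile n H P" "x \<in> agents n" "a \<in> H" "b \<in> H" "c \<in> H"
    "a \<noteq> b" "b \<noteq> c" "a \<noteq> c"
  shows "pref_sign P x a b + pref_sign P x b c + pref_sign P x c a \<in> {-1, 1}"
proof -
  have "strict_linear_order_on H (P x)" using assms(1,2) by (simp add: is_profile_def)
  then have "trans (P x)" "irrefl (P x)" "total_on H (P x)"
    by (simp_all add: strict_linear_order_on_def)
  then have no_cycle: "\<not> ((u, v) \<in> P x \<and> (v, w) \<in> P x \<and> (w, u) \<in> P x)"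
    and total: "u \<in> H \<Longrightarrow> v \<in> H \<Longrightarrow> u \<noteq> v \<Longrightarrow> (u, v) \<notin> P x \<Longrightarrow> (v, u) \<in> P x" for u v w
    unfolding trans_def irrefl_def total_on_def by blast+
  show ?thesis
    using no_cycle[of a b c] no_cycle[of a c b] total[of a b] total[of b c] total[of c a] assms(3-8)
    by (auto simp: pref_sign_distinct[OF assms(1,2)])
qed

lemma assignment_comp_permutes:
  assumes "m \<in> assignments n H" "\<pi> permutes agents n"
  shows "m \<circ> \<pi> \<in> assignments n H"
proof -
  have "bij_betw (m \<circ> \<pi>) (agents n) H"
    using assms permutes_imp_bij bij_betw_trans unfolding assignments_def by blast
  moreover have "m \<circ> \<pi> \<in> extensional (agents n)"
    using assms by (auto simp: assignments_def extensional_def permutes_not_in)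
  ultimately show ?thesis by (simp add: assignments_def)
qed

lemma assignment_extend:
  assumes "finite H" "card H = n" "S \<subseteq> agents n" "inj_on f S" "f ` S \<subseteq> H"
  obtains m where "m \<in> assignments n H" "\<And>x. x \<in> S \<Longrightarrow> m x = f x"
proof -
  have fin: "finite S" using assms(3) finite_agents by (rule finite_subset)
  have "card (agents n - S) = n - card S"
    using assms(3) fin by (simp add: card_Diff_subset agents_def)
  also have "\<dots> = card (H - f ` S)"
    using assms(1,2,4,5) fin by (simp add: card_Diff_subset card_image)
  finally obtain g where g: "bij_betw g (agents n - S) (H - f ` S)"
    using assms(1) finite_same_card_bij by (metis finite_Diff finite_agents)
  define F where "F x = (if x \<in> S then f x else g x)" for x
  have "bij_betw F S (f ` S)"
    using bij_betw_cong[of S F f] inj_on_imp_bij_betw[OF assms(4)] by (simp add: F_def)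
  moreover have "bij_betw F (agents n - S) (H - f ` S)"
    using bij_betw_cong[of "agents n - S" F g] g by (simp add: F_def)
  ultimately have "bij_betw F (S \<union> (agents n - S)) (f ` S \<union> (H - f ` S))"
    by (rule bij_betw_combine) blast
  then have "bij_betw (restrict F (agents n)) (agents n) H"
    using assms(3,5) bij_betw_cong[of "agents n" "restrict F (agents n)" F H]
    by (simp add: Un_absorb1 Un_Diff_cancel)
  moreover have "restrict F (agents n) x = f x" if "x \<in> S" for x
    using that assms(3) by (auto simp: F_def)
  ultimately show ?thesis
    using that[of "restrict F (agents n)"] by (simp add: assignments_def)
qed

lemma margin_comp_permutes:
  assumes "\<pi> permutes S" "S \<subseteq> agents n"
  shows "margin n P (m \<circ> \<pi>) m = (\<Sum>x\<in>S. pref_sign P x (m (\<pi> x)) (m x))"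
  unfolding margin_eq_sum_pref_sign comp_apply
  by (rule sum.mono_neutral_right) (use assms in \<open>auto simp: permutes_not_in\<close>)

lemma sgn_margin_eq:
  assumes "maj_graph n H P = maj_graph n H P'" "l \<in> assignments n H" "m \<in> assignments n H"
  shows "sgn (margin n P l m) = sgn (margin n P' l m)"
proof -
  have "(l, m) \<in> maj_graph n H Q \<longleftrightarrow> 0 \<le> margin n Q l m"
    and "(m, l) \<in> maj_graph n H Q \<longleftrightarrow> margin n Q l m \<le> 0" for Q
    using assms(2,3) by (auto simp: maj_graph_def margin_def)
  then have "0 \<le> margin n P l m \<longleftrightarrow> 0 \<le> margin n P' l m"
    and "margin n P l m \<le> 0 \<longleftrightarrow> margin n P' l m \<le> 0"
    using assms(1) by blast+
  then show ?thesis by (auto simp: sgn_if)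
qed

lemma pref_sign_diff_agent_independent:
  assumes H: "finite H" "card H = n" and prof: "is_profile n H P" "is_profile n H P'"
    and G: "maj_graph n H P = maj_graph n H P'"
    and ij: "i \<in> agents n" "j \<in> agents n" and uv: "u \<in> H" "v \<in> H"
  shows "pref_sign P i u v - pref_sign P' i u v = pref_sign P j u v - pref_sign P' j u v"
proof (cases "i = j \<or> u = v")
  case True
  then show ?thesis by auto
next
  case False
  obtain m where m: "m \<in> assignments n H" and "\<And>x. x \<in> {i, j} \<Longrightarrow> m x = ((\<lambda>_. v)(j := u)) x"
    by (rule assignment_extend[OF H, of "{i, j}" "(\<lambda>_. v)(j := u)"]) (use ij uv False in auto)
  then have m: "m \<in> assignments n H" "m i = v" "m j = u"
    using False by auto
  have \<pi>: "Transposition.transpose i j permutes {i, j}"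
    by (simp add: permutes_swap_id)
  then have l: "m \<circ> Transposition.transpose i j \<in> assignments n H"
    using m(1) ij by (blast intro: assignment_comp_permutes permutes_subset)
  have "margin n Q (m \<circ> Transposition.transpose i j) m = pref_sign Q i u v - pref_sign Q j u v" for Q
    using margin_comp_permutes[OF \<pi>, of n Q m] ij m(2,3) False pref_sign_swap[of Q j u v] by simp
  then have "sgn (pref_sign P i u v - pref_sign P j u v) = sgn (pref_sign P' i u v - pref_sign P' j u v)"
    using sgn_margin_eq[OF G l m(1)] by simp
  then show ?thesis
    using False ij uv by (auto simp: pref_sign_distinct[OF prof(1)] pref_sign_distinct[OF prof(2)] sgn_if
        split: if_splits)
qed

lemma exists_rearrangement_sum_eq_1:
  fixes f g h :: "'a \<Rightarrow> int"
  assumes "distinct [x, y, z]"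
    and "\<And>w. w \<in> {x, y, z} \<Longrightarrow> f w \<in> {-1, 1} \<and> g w \<in> {-1, 1} \<and> h w \<in> {-1, 1} \<and> f w + g w + h w = 1"
  shows "\<exists>i\<in>{x, y, z}. \<exists>j\<in>{x, y, z}. \<exists>k\<in>{x, y, z}. distinct [i, j, k] \<and> f i + g j + h k = 1"
proof -
  have "f x + g y + h z = 1 \<or> f x + g z + h y = 1 \<or> f y + g x + h z = 1 \<or>
        f y + g z + h x = 1 \<or> f z + g x + h y = 1 \<or> f z + g y + h x = 1"
    using assms(2)[of x] assms(2)[of y] assms(2)[of z] by auto
  then show ?thesis using assms(1) by auto
qed

lemma cycle_orientation_not_reversed:
  assumes H: "finite H" "card H = n" and prof: "is_profile n H P" "is_profile n H P'"
    and G: "maj_graph n H P = maj_graph n H P'"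
    and abc: "a \<in> H" "b \<in> H" "c \<in> H" "distinct [a, b, c]"
    and P: "\<And>x. x \<in> agents n \<Longrightarrow> pref_sign P x a b + pref_sign P x b c + pref_sign P x c a = 1"
    and P': "\<And>x. x \<in> agents n \<Longrightarrow> pref_sign P' x a b + pref_sign P' x b c + pref_sign P' x c a = -1"
  shows False
proof -
  have "card {a, b, c} \<le> n"
    using card_mono[OF H(1), of "{a, b, c}"] abc H(2) by simp
  then have agents3: "{1, 2, 3} \<subseteq> agents n"
    using abc(4) by (auto simp: agents_def)
  obtain i j k where ijk: "i \<in> agents n" "j \<in> agents n" "k \<in> agents n" "distinct [i, j, k]"
    and sum_P: "pref_sign P i a b + pref_sign P j b c + pref_sign P k c a = 1"
  proof -
    have "\<exists>i\<in>{1, 2, 3}. \<exists>j\<in>{1, 2, 3}. \<exists>k\<in>{1, 2, 3::nat}. distinct [i, j, k] \<and>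
        pref_sign P i a b + pref_sign P j b c + pref_sign P k c a = 1"
    proof (rule exists_rearrangement_sum_eq_1)
      fix w :: nat
      assume "w \<in> {1, 2, 3}"
      then have "w \<in> agents n" using agents3 by blast
      then show "pref_sign P w a b \<in> {-1, 1} \<and> pref_sign P w b c \<in> {-1, 1} \<and>
          pref_sign P w c a \<in> {-1, 1} \<and> pref_sign P w a b + pref_sign P w b c + pref_sign P w c a = 1"
        using P pref_sign_distinct_range[OF prof(1)] abc by auto
    qed simp
    then show ?thesis using that agents3 by blast
  qed
  obtain m where "m \<in> assignments n H"
    and "\<And>x. x \<in> {i, j, k} \<Longrightarrow> m x = ((\<lambda>_. b)(j := c, k := a)) x"
    by (rule assignment_extend[OF H, of "{i, j, k}" "(\<lambda>_. b)(j := c, k := a)"])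
      (use ijk abc in auto)
  then have m: "m \<in> assignments n H" "m i = b" "m j = c" "m k = a"
    using ijk(4) by auto
  define \<pi> where "\<pi> = Transposition.transpose i j \<circ> Transposition.transpose i k"
  have \<pi>: "\<pi> permutes {i, j, k}"
    unfolding \<pi>_def by (intro permutes_compose permutes_swap_id) auto
  have \<pi>_vals: "\<pi> i = k" "\<pi> j = i" "\<pi> k = j"
    using ijk(4) by (auto simp: \<pi>_def)
  have l: "m \<circ> \<pi> \<in> assignments n H"
    using m(1) \<pi> ijk(1-3) by (blast intro: assignment_comp_permutes permutes_subset)
  have margin: "margin n Q (m \<circ> \<pi>) m = pref_sign Q i a b + pref_sign Q j b c + pref_sign Q k c a" for Q
    using margin_comp_permutes[OF \<pi>, of n Q m] ijk m(2-4) \<pi>_vals by simp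
  have "pref_sign P' j b c = pref_sign P j b c - (pref_sign P i b c - pref_sign P' i b c)"
    using pref_sign_diff_agent_independent[OF H prof G ijk(1,2) abc(2,3)] by linarith
  moreover have "pref_sign P' k c a = pref_sign P k c a - (pref_sign P i c a - pref_sign P' i c a)"
    using pref_sign_diff_agent_independent[OF H prof G ijk(1,3) abc(3,1)] by linarith
  \<comment> \<open>the P'-margin of the rotation is its P-margin 1 minus the difference 2 of the cycle sums at i\<close>
  ultimately have "margin n P' (m \<circ> \<pi>) m = -1"
    using margin[of P'] P[OF ijk(1)] P'[OF ijk(1)] sum_P by linarith
  moreover have "margin n P (m \<circ> \<pi>) m = 1"
    using margin[of P] sum_P by simp
  ultimately show False
    using sgn_margin_eq[OF G l m(1)] by simp
qed

lemma pref_sign_diff_cycle_sum_eq_0: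
  assumes H: "finite H" "card H = n" and prof: "is_profile n H P" "is_profile n H P'"
    and G: "maj_graph n H P = maj_graph n H P'"
    and x: "x \<in> agents n" and abc: "a \<in> H" "b \<in> H" "c \<in> H"
  shows "(pref_sign P x a b - pref_sign P' x a b) + (pref_sign P x b c - pref_sign P' x b c)
       + (pref_sign P x c a - pref_sign P' x c a) = 0"
proof (cases "distinct [a, b, c]")
  case False
  then show ?thesis
    using pref_sign_swap[of P x a b] pref_sign_swap[of P' x a b] pref_sign_swap[of P x b c]
      pref_sign_swap[of P' x b c] pref_sign_swap[of P x c a] pref_sign_swap[of P' x c a]
    by auto
next
  case True
  define t where "t Q y = pref_sign Q y a b + pref_sign Q y b c + pref_sign Q y c a" for Q y
  have t_range: "t Q y \<in> {-1, 1}" if "is_profile n H Q" "y \<in> agents n" for Q y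
    using pref_sign_cycle[OF that abc] True by (simp add: t_def)
  have t_diff: "t P y - t P' y = t P x - t P' x" if "y \<in> agents n" for y
    using pref_sign_diff_agent_independent[OF H prof G that x abc(1,2)]
      pref_sign_diff_agent_independent[OF H prof G that x abc(2,3)]
      pref_sign_diff_agent_independent[OF H prof G that x abc(3,1)]
    by (simp add: t_def)
  have "t P x - t P' x \<noteq> 2"
  proof
    assume "t P x - t P' x = 2"
    then have "t P y = 1" "t P' y = -1" if "y \<in> agents n" for y
      using t_diff[OF that] t_range[OF prof(1) that] t_range[OF prof(2) that] by auto
    then show False
      using cycle_orientation_not_reversed[OF H prof G abc True] by (simp add: t_def)
  qed
  moreover have "t P x - t P' x \<noteq> -2"
  proof
    assume "t P x - t P' x = -2"
    then have "t P' y = 1" "t P y = -1" if "y \<in> agents n" for y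
      using t_diff[OF that] t_range[OF prof(1) that] t_range[OF prof(2) that] by auto
    then show False
      using cycle_orientation_not_reversed[OF H prof(2,1) G[symmetric] abc True] by (simp add: t_def)
  qed
  ultimately have "t P x - t P' x = 0"
    using t_range[OF prof(1) x] t_range[OF prof(2) x] by auto
  then show ?thesis by (simp add: t_def)
qed

lemma potential_of_zero_cycle_sums:
  fixes \<delta> :: "'a \<Rightarrow> 'a \<Rightarrow> int"
  assumes cycle: "\<And>a b c. a \<in> A \<Longrightarrow> b \<in> A \<Longrightarrow> c \<in> A \<Longrightarrow> \<delta> a b + \<delta> b c + \<delta> c a = 0"
    and "h \<in> A" "u \<in> A" "v \<in> A"
  shows "\<delta> u v = \<delta> u h - \<delta> v h"
proof -
  have "\<delta> h h = 0"
    using cycle[of h h h] assms(2) by simp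
  then have "\<delta> h u = - \<delta> u h"
    using cycle[of u h h] assms(2,3) by simp
  then show ?thesis
    using cycle[of u v h] assms(2-4) by simp
qed

lemma margin_determined_by_maj_graph:
  assumes H: "finite H" "card H = n" and prof: "is_profile n H P" "is_profile n H P'"
    and G: "maj_graph n H P = maj_graph n H P'"
    and l: "l \<in> assignments n H" and m: "m \<in> assignments n H"
  shows "margin n P l m = margin n P' l m"
proof (cases "n = 0")
  case True
  then show ?thesis by (simp add: margin_eq_sum_pref_sign agents_def)
next
  case False
  then have one: "1 \<in> agents n" by (simp add: agents_def)
  obtain h where h: "h \<in> H" using False H by fastforce
  define \<delta> where "\<delta> u v = pref_sign P 1 u v - pref_sign P' 1 u v" for u v
  define \<phi> where "\<phi> u = \<delta> u h" for u
  have \<delta>_\<phi>: "\<delta> u v = \<phi> u - \<phi> v" if "u \<in> H" "v \<in> H" for u v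
    unfolding \<phi>_def
    by (rule potential_of_zero_cycle_sums[where A = H])
      (use pref_sign_diff_cycle_sum_eq_0[OF H prof G one] h that in \<open>simp_all add: \<delta>_def\<close>)
  have l_bij: "bij_betw l (agents n) H" and m_bij: "bij_betw m (agents n) H"
    using l m by (simp_all add: assignments_def)
  have "margin n P l m - margin n P' l m
      = (\<Sum>x\<in>agents n. pref_sign P x (l x) (m x) - pref_sign P' x (l x) (m x))"
    by (simp add: margin_eq_sum_pref_sign sum_subtractf)
  also have "\<dots> = (\<Sum>x\<in>agents n. \<phi> (l x) - \<phi> (m x))"
  proof (rule sum.cong)
    fix x assume x: "x \<in> agents n"
    have "l x \<in> H" "m x \<in> H"
      using x l_bij m_bij by (auto simp: bij_betw_def)
    then show "pref_sign P x (l x) (m x) - pref_sign P' x (l x) (m x) = \<phi> (l x) - \<phi> (m x)"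
      using pref_sign_diff_agent_independent[OF H prof G x one] \<delta>_\<phi> by (simp add: \<delta>_def)
  qed simp
  also have "\<dots> = (\<Sum>u\<in>H. \<phi> u) - (\<Sum>u\<in>H. \<phi> u)"
    by (simp add: sum_subtractf sum.reindex_bij_betw[OF l_bij] sum.reindex_bij_betw[OF m_bij])
  finally show ?thesis by simp
qed

lemma pareto_dominates_iff_margin:
  assumes prof: "is_profile n H P" and l: "l \<in> assignments n H" and m: "m \<in> assignments n H"
  shows "pareto_dominates n P l m \<longleftrightarrow>
    l \<noteq> m \<and> margin n P l m = int (card {x \<in> agents n. l x \<noteq> m x})"
proof -
  define D where "D = {x \<in> agents n. l x \<noteq> m x}"
  have "finite D" by (simp add: D_def)
  have lH: "l x \<in> H" and mH: "m x \<in> H" if "x \<in> agents n" for x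
    using l m that by (auto simp: assignments_def bij_betw_def)
  have irrefl: "(u, u) \<notin> P x" if "x \<in> agents n" for x u
    using prof that by (auto simp: is_profile_def strict_linear_order_on_def irrefl_def)
  have sign_D: "pref_sign P x (l x) (m x) = (if (l x, m x) \<in> P x then 1 else -1)" if "x \<in> D" for x
    using that pref_sign_distinct[OF prof _ lH mH] by (simp add: D_def)
  have "margin n P l m = (\<Sum>x\<in>D. pref_sign P x (l x) (m x))"
    unfolding margin_eq_sum_pref_sign D_def by (rule sum.mono_neutral_right) auto
  then have "margin n P l m = int (card D) \<longleftrightarrow> (\<Sum>x\<in>D. 1 - pref_sign P x (l x) (m x)) = 0"
    by (auto simp: sum_subtractf)
  also have "\<dots> \<longleftrightarrow> (\<forall>x\<in>D. (l x, m x) \<in> P x)"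
    using sum_nonneg_eq_0_iff[OF \<open>finite D\<close>, of "\<lambda>x. 1 - pref_sign P x (l x) (m x)"] sign_D
    by auto
  finally have margin_iff: "margin n P l m = int (card D) \<longleftrightarrow> (\<forall>x\<in>D. (l x, m x) \<in> P x)" .
  have "l \<noteq> m \<longleftrightarrow> D \<noteq> {}"
    using l m extensionalityI[of l "agents n" m] by (auto simp: assignments_def D_def)
  then show ?thesis
    using margin_iff irrefl
    by (auto simp: pareto_dominates_def weak_pref_def strict_pref_def D_def)
qed

lemma majoritarian_if_margin_determined:
  assumes "finite H" "card H = n"
    and "\<And>P P'. is_profile n H P \<Longrightarrow> is_profile n H P' \<Longrightarrow>
      (\<And>l m. l \<in> assignments n H \<Longrightarrow> m \<in> assignments n H \<Longrightarrow> margin n P l m = margin n P' l m) \<Longrightarrow>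
      F P = F P'"
  shows "majoritarian n H F"
  unfolding majoritarian_def using assms margin_determined_by_maj_graph by blast

lemma PO_margin_cong:
  assumes "is_profile n H P" "is_profile n H P'"
    and "\<And>l m. l \<in> assignments n H \<Longrightarrow> m \<in> assignments n H \<Longrightarrow> margin n P l m = margin n P' l m"
  shows "PO n H P = PO n H P'"
  using pareto_dominates_iff_margin[OF assms(1)] pareto_dominates_iff_margin[OF assms(2)] assms(3)
  unfolding PO_def by auto

lemma least_unpopularity_margin_cong:
  assumes "\<And>l m. l \<in> assignments n H \<Longrightarrow> m \<in> assignments n H \<Longrightarrow> margin n P l m = margin n P' l m"
  shows "least_unpopularity n H P = least_unpopularity n H P'"
proof -
  have "unpopularity_margin n H P m = unpopularity_margin n H P' m" if "m \<in> assignments n H" for m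
    unfolding unpopularity_margin_def using assms that by (auto intro!: arg_cong[where f = Max])
  then show ?thesis
    unfolding least_unpopularity_def by auto
qed

lemma mixed_popularity_margin_cong:
  assumes "\<And>l m. l \<in> assignments n H \<Longrightarrow> m \<in> assignments n H \<Longrightarrow> margin n P l m = margin n P' l m"
  shows "mixed_popularity n H P = mixed_popularity n H P'"
proof -
  have "mixed_popular n H P \<pi> \<longleftrightarrow> mixed_popular n H P' \<pi>" for \<pi>
    unfolding mixed_popular_def using assms by (auto intro!: sum.cong)
  then show ?thesis
    unfolding mixed_popularity_def by auto
qed

theorem corollary4p1:
  fixes n :: nat and H :: "'h set"
  assumes "finite H" and "card H = n"
  shows "majoritarian n H (PO n H)
       \<and> majoritarian n H (least_unpopularity n H)
       \<and> majoritarian n H (mixed_popularity n H)"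
  using assms
  by (intro conjI majoritarian_if_margin_determined PO_margin_cong least_unpopularity_margin_cong
      mixed_popularity_margin_cong) blast+

end
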